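(* There is a constant $C$, depending only on $h$ and $b_1,\dots,b_h$, with the following property. Let $A\subseteq\mathbb{Z}_{\ge0}$, $0<\delta<1$, $2\le\ell\le h$ and $n\ge0$. Let $\mathrm{R}$ be any one of $r,\ r^*,\ \rho,\ \rho^{(\delta\text{-small})}$. Then \[ \mathrm{R}_{A,\ell}(n)\le C\,\widehat{\mathrm{R}}_{A,\ell}(n)\prod_{j=2}^{\ell-1}\Big(\max_{0\le k\le n}\widehat{r}^{\,*}_{A,j}(k)\Big), \] where the empty product (for $\ell=2$) equals $1$.
   Context: Fix an integer $h\ge 2$ and positive integers $b_1,\dots,b_h$, not necessarily distinct, with $\gcd(b_1,\dots,b_h)=1$. Let $A\subseteq\mathbb{Z}_{\ge0}$, $1\le\ell\le h$ and $n\ge0$ be an integer. Representation functions: - $r_{A,\ell}(n)$ counts the tuples $(k_1,\dots,k_\ell)\in A^\ell$ with $b_1k_1+\cdots+b_\ell k_\ell=n$. - $\rho_{A,\ell}(n)$ counts those tuples in which the $k_i$ are pairwise distinct ("exact" solutions). - For $0<\delta<1$, $\rho^{(\delta\text{-small})}_{A,\ell}(n)$ counts exact solutions with $k_j<n^\delta$ for some $j$. - $r^*_{A,\ell}(n)$ is the maximum, over index choices $1\le i_1<\cdots<i_\ell\le h$, of the number of $(k_1,\dots,k_\ell)\in A^\ell$ with $b_{i_1}k_1+\cdots+b_{i_\ell}k_\ell=n$. Disjoint families: the support of a solution tuple is the set $\{k_1,\dots,k_\ell\}$. A family of solutions is disjoint if their supports are pairwise disjoint. For each of the counting functions $\mathrm{R}$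 above, $\widehat{\mathrm{R}}_{A,\ell}(n)$ denotes the maximum cardinality of a disjoint family of solutions among those counted by $\mathrm{R}_{A,\ell}(n)$. For the starred function, $\widehat{r}^{\,*}_{A,\ell}(n)$ is the maximum over index choices $i_1<\cdots<i_\ell$ of the maximum cardinality of a disjoint family of solutions in $A^\ell$ of $b_{i_1}k_1+\cdots+b_{i_\ell}k_\ell=n$. *)

theory Defs
  imports Complex_Main
begin

text \<open>The coefficients b_1,...,b_h are given by a function b :: nat => nat on indices 1..h.\<close>

definition sols :: "nat set \<Rightarrow> nat list \<Rightarrow> nat \<Rightarrow> nat list set" where
  "sols A c n = {ks. length ks = length c \<and> set ks \<subseteq> A \<and>
                     (\<Sum>i<length c. c ! i * ks ! i) = n}"

definition disjoint_family_sols :: "nat list set \<Rightarrow> bool" where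
  "disjoint_family_sols F \<longleftrightarrow> (\<forall>x\<in>F. \<forall>y\<in>F. x \<noteq> y \<longrightarrow> set x \<inter> set y = {})"

definition hatc :: "nat list set \<Rightarrow> nat" where
  "hatc S = Max {card F | F. F \<subseteq> S \<and> finite F \<and> disjoint_family_sols F}"

definition bvec :: "(nat \<Rightarrow> nat) \<Rightarrow> nat \<Rightarrow> nat list" where
  "bvec b l = map b [1..<l+1]"

definition index_choices :: "nat \<Rightarrow> nat \<Rightarrow> nat list set" where
  "index_choices h l = {is. sorted_wrt (<) is \<and> length is = l \<and> set is \<subseteq> {1..h}}"

definition r_sols :: "(nat \<Rightarrow> nat) \<Rightarrow> nat set \<Rightarrow> nat \<Rightarrow> nat \<Rightarrow> nat list set" where
  "r_sols b A l n = sols A (bvec b l) n"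

definition rho_sols :: "(nat \<Rightarrow> nat) \<Rightarrow> nat set \<Rightarrow> nat \<Rightarrow> nat \<Rightarrow> nat list set" where
  "rho_sols b A l n = {ks \<in> sols A (bvec b l) n. distinct ks}"

definition rho_small_sols :: "(nat \<Rightarrow> nat) \<Rightarrow> real \<Rightarrow> nat set \<Rightarrow> nat \<Rightarrow> nat \<Rightarrow> nat list set" where
  "rho_small_sols b \<delta> A l n =
     {ks \<in> sols A (bvec b l) n. distinct ks \<and> (\<exists>j<l. real (ks ! j) < real n powr \<delta>)}"

definition r_fn :: "(nat \<Rightarrow> nat) \<Rightarrow> nat set \<Rightarrow> nat \<Rightarrow> nat \<Rightarrow> nat" where
  "r_fn b A l n = card (r_sols b A l n)"

definition rho_fn :: "(nat \<Rightarrow> nat) \<Rightarrow> nat set \<Rightarrow> nat \<Rightarrow> nat \<Rightarrow> nat" where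
  "rho_fn b A l n = card (rho_sols b A l n)"

definition rho_small_fn :: "(nat \<Rightarrow> nat) \<Rightarrow> real \<Rightarrow> nat set \<Rightarrow> nat \<Rightarrow> nat \<Rightarrow> nat" where
  "rho_small_fn b \<delta> A l n = card (rho_small_sols b \<delta> A l n)"

definition r_star_fn :: "nat \<Rightarrow> (nat \<Rightarrow> nat) \<Rightarrow> nat set \<Rightarrow> nat \<Rightarrow> nat \<Rightarrow> nat" where
  "r_star_fn h b A l n = Max ((\<lambda>is. card (sols A (map b is) n)) ` index_choices h l)"

definition hat_r_fn :: "(nat \<Rightarrow> nat) \<Rightarrow> nat set \<Rightarrow> nat \<Rightarrow> nat \<Rightarrow> nat" where
  "hat_r_fn b A l n = hatc (r_sols b A l n)"

definition hat_rho_fn :: "(nat \<Rightarrow> nat) \<Rightarrow> nat set \<Rightarrow> nat \<Rightarrow> nat \<Rightarrow> nat" where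
  "hat_rho_fn b A l n = hatc (rho_sols b A l n)"

definition hat_rho_small_fn :: "(nat \<Rightarrow> nat) \<Rightarrow> real \<Rightarrow> nat set \<Rightarrow> nat \<Rightarrow> nat \<Rightarrow> nat" where
  "hat_rho_small_fn b \<delta> A l n = hatc (rho_small_sols b \<delta> A l n)"

definition hat_r_star_fn :: "nat \<Rightarrow> (nat \<Rightarrow> nat) \<Rightarrow> nat set \<Rightarrow> nat \<Rightarrow> nat \<Rightarrow> nat" where
  "hat_r_star_fn h b A l n = Max ((\<lambda>is. hatc (sols A (map b is) n)) ` index_choices h l)"

definition prod_factor :: "nat \<Rightarrow> (nat \<Rightarrow> nat) \<Rightarrow> nat set \<Rightarrow> nat \<Rightarrow> nat \<Rightarrow> real" where
  "prod_factor h b A l n = (\<Prod>j\<in>{2..<l}. real (Max ((\<lambda>k. hat_r_star_fn h b A j k) ` {0..n})))"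

end

theory Submission
  imports Defs
begin

text \<open>Let F be a maximal disjoint family of solutions in a set S of solutions. Every solution
in S shares a variable value with some member of F, and F involves at most l |F| values; fixing
one coordinate of a solution leaves a solution of an equation in l - 1 variables. Hence
|S| \<le> l^2 |F| (maximal number of solutions in l - 1 variables), and induction on the number
of variables bounds the latter by a constant times the product of the maximal disjoint
family sizes in 2, \<dots>, l - 1 variables.\<close>

definition remove_nth :: "nat \<Rightarrow> 'a list \<Rightarrow> 'a list" where
  "remove_nth i xs = take i xs @ drop (Suc i) xs"

lemma length_remove_nth: "i < length xs \<Longrightarrow> length (remove_nth i xs) = length xs - 1"
  by (simp add: remove_nth_def)

lemma set_remove_nth_subset: "set (remove_nth i xs) \<subseteq> set xs"
  by (auto simp: remove_nth_def dest: in_set_takeD in_set_dropD)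

lemma remove_nth_map: "remove_nth i (map f xs) = map f (remove_nth i xs)"
  by (simp add: remove_nth_def take_map drop_map)

lemma remove_nth_zip:
  "length xs = length ys \<Longrightarrow> remove_nth i (zip xs ys) = zip (remove_nth i xs) (remove_nth i ys)"
  by (simp add: remove_nth_def take_zip drop_zip)

lemma sum_list_remove_nth:
  fixes xs :: "'a::comm_monoid_add list"
  assumes "i < length xs"
  shows "sum_list xs = xs ! i + sum_list (remove_nth i xs)"
proof -
  have "sum_list xs = sum_list (take i xs @ xs ! i # drop (Suc i) xs)"
    using id_take_nth_drop[OF assms] by simp
  then show ?thesis by (simp add: remove_nth_def add_ac)
qed

lemma remove_nth_inject:
  assumes "i < length xs" "length xs = length ys"
    and "xs ! i = ys ! i" "remove_nth i xs = remove_nth i ys"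
  shows "xs = ys"
proof -
  have "take i xs = take i ys" "drop (Suc i) xs = drop (Suc i) ys"
    using assms by (simp_all add: remove_nth_def append_eq_append_conv)
  then show ?thesis
    using id_take_nth_drop[of i xs] id_take_nth_drop[of i ys] assms by simp
qed

lemma sorted_wrt_remove_nth:
  assumes "sorted_wrt (<) xs"
  shows "sorted_wrt (<) (remove_nth i xs)"
proof -
  have "sorted_wrt (<) (take i xs @ drop i xs)" using assms by simp
  then have "\<forall>x\<in>set (take i xs). \<forall>y\<in>set (drop i xs). x < y" "sorted_wrt (<) (take i xs)"
    unfolding sorted_wrt_append by simp_all
  moreover have "set (drop (Suc i) xs) \<subseteq> set (drop i xs)"
    by (rule set_drop_subset_set_drop) simp
  ultimately show ?thesis
    using sorted_wrt_drop[OF assms, of "Suc i"] by (auto simp: remove_nth_def sorted_wrt_append)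
qed

lemma sum_nth_mult_eq_sum_list:
  "length ks = length c \<Longrightarrow> (\<Sum>i<length c. c ! i * ks ! i) = sum_list (map2 (*) c ks)"
  by (simp add: sum_list_sum_nth lessThan_atLeast0)

lemma sols_finite:
  assumes "\<forall>x\<in>set c. 0 < x"
  shows "finite (sols A c k)"
proof -
  have "sols A c k \<subseteq> {xs. set xs \<subseteq> {0..k} \<and> length xs = length c}"
  proof safe
    fix ks y assume ks: "ks \<in> sols A c k" and "y \<in> set ks"
    then obtain i where i: "i < length c" "y = ks ! i"
      by (auto simp: in_set_conv_nth sols_def)
    have "0 < c ! i" using assms nth_mem[OF i(1)] by blast
    then have "ks ! i \<le> c ! i * ks ! i" by simp
    also have "\<dots> \<le> (\<Sum>i<length c. c ! i * ks ! i)" by (rule member_le_sum) (use i in auto)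
    finally show "y \<in> {0..k}" using ks i by (simp add: sols_def)
  qed (simp add: sols_def)
  then show ?thesis using finite_lists_length_eq[of "{0..k}"] finite_subset by blast
qed

lemma card_sols_singleton_le:
  assumes "0 < c"
  shows "card (sols A [c] k) \<le> 1"
proof -
  have "sols A [c] k \<subseteq> {[k div c]}"
    using assms by (auto simp: sols_def length_Suc_conv)
  then show ?thesis using card_mono[of "{[k div c]}"] by fastforce
qed

lemma card_sols_fiber_le:
  assumes S: "S \<subseteq> sols A c k" and i: "i < length c" and pos: "\<forall>y\<in>set c. 0 < y"
  shows "card {s\<in>S. s ! i = x} \<le> card (sols A (remove_nth i c) (k - c ! i * x))"
proof (rule card_inj_on_le[where f = "remove_nth i"])
  show "finite (sols A (remove_nth i c) (k - c ! i * x))"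
    using pos set_remove_nth_subset[of i c] by (intro sols_finite) blast
  show "inj_on (remove_nth i) {s\<in>S. s ! i = x}"
  proof (rule inj_onI)
    fix s t assume s: "s \<in> {s\<in>S. s ! i = x}" and t: "t \<in> {s\<in>S. s ! i = x}"
      and eq: "remove_nth i s = remove_nth i t"
    have "length s = length c" "length t = length c"
      using S s t by (auto simp: sols_def)
    with i s t eq show "s = t" by (metis (mono_tags) mem_Collect_eq remove_nth_inject)
  qed
  show "remove_nth i ` {s\<in>S. s ! i = x} \<subseteq> sols A (remove_nth i c) (k - c ! i * x)"
  proof safe
    fix s assume "s \<in> S" and x: "x = s ! i"
    then have s: "length s = length c" "set s \<subseteq> A" "(\<Sum>j<length c. c ! j * s ! j) = k"
      using S by (auto simp: sols_def)
    have len: "length (remove_nth i s) = length (remove_nth i c)"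
      using s i by (simp add: length_remove_nth)
    have "k = c ! i * x + sum_list (map2 (*) (remove_nth i c) (remove_nth i s))"
      using s i x sum_list_remove_nth[of i "map2 (*) c s"]
      by (simp add: sum_nth_mult_eq_sum_list remove_nth_zip remove_nth_map)
    then show "remove_nth i s \<in> sols A (remove_nth i c) (k - c ! i * s ! i)"
      using len s(2) set_remove_nth_subset[of i s] x
      by (simp add: sols_def sum_nth_mult_eq_sum_list)
  qed
qed

lemma finite_disjoint_family_cards:
  assumes "finite S"
  shows "finite {card F | F. F \<subseteq> S \<and> finite F \<and> disjoint_family_sols F}"
proof (rule finite_subset[of _ "{0..card S}"])
  show "{card F | F. F \<subseteq> S \<and> finite F \<and> disjoint_family_sols F} \<subseteq> {0..card S}"
    using assms by (auto intro: card_mono)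
qed simp

lemma exists_max_disjoint_family:
  assumes "finite S"
  obtains F where "F \<subseteq> S" "finite F" "disjoint_family_sols F" "card F = hatc S"
proof -
  let ?cards = "{card F | F. F \<subseteq> S \<and> finite F \<and> disjoint_family_sols F}"
  have "finite ?cards" by (rule finite_disjoint_family_cards[OF assms])
  moreover have "card {} \<in> ?cards"
    by (rule CollectI, rule exI[of _ "{}"]) (simp add: disjoint_family_sols_def)
  ultimately have "Max ?cards \<in> ?cards" by (intro Max_in) auto
  then show ?thesis using that unfolding hatc_def by auto
qed

lemma card_le_hatc:
  assumes "finite S" "F \<subseteq> S" "disjoint_family_sols F"
  shows "card F \<le> hatc S"
  unfolding hatc_def using assms finite_subset[OF assms(2,1)]
  by (intro Max_ge finite_disjoint_family_cards) auto

lemma disjoint_family_sols_insert: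
  assumes "disjoint_family_sols F" "\<forall>t\<in>F. set s \<inter> set t = {}"
  shows "disjoint_family_sols (insert s F)"
  using assms unfolding disjoint_family_sols_def by blast

text \<open>The covering argument: a maximal disjoint family meets every solution.\<close>

lemma card_le_hatc_mult_fiber_bound:
  fixes S :: "nat list set"
  assumes fin: "finite S" and len: "\<forall>s\<in>S. length s = L" and "1 \<le> L"
    and fiber: "\<forall>i<L. \<forall>x. card {s\<in>S. s ! i = x} \<le> B"
  shows "card S \<le> L * L * hatc S * B"
proof -
  obtain F where F: "F \<subseteq> S" "finite F" "disjoint_family_sols F" "card F = hatc S"
    using exists_max_disjoint_family[OF fin] .
  define U where "U = \<Union>(set ` F)"
  have "finite U" using F(2) by (simp add: U_def)
  have meets: "\<exists>i<L. s ! i \<in> U" if s: "s \<in> S" for s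
  proof (rule ccontr)
    assume "\<not> (\<exists>i<L. s ! i \<in> U)"
    then have disj: "\<forall>t\<in>F. set s \<inter> set t = {}"
      using len s by (auto simp: U_def in_set_conv_nth)
    moreover have "s \<noteq> []" using len s \<open>1 \<le> L\<close> by auto
    ultimately have "s \<notin> F" by (metis inf.idem set_empty)
    moreover have "card (insert s F) \<le> hatc S"
      using s F disj by (intro card_le_hatc fin disjoint_family_sols_insert) auto
    ultimately show False using F by simp
  qed
  have "S \<subseteq> (\<Union>x\<in>U. \<Union>i<L. {s\<in>S. s ! i = x})" using meets by blast
  then have "card S \<le> card (\<Union>x\<in>U. \<Union>i<L. {s\<in>S. s ! i = x})"
    using \<open>finite U\<close> fin by (intro card_mono) auto
  also have "\<dots> \<le> (\<Sum>x\<in>U. \<Sum>i<L. card {s\<in>S. s ! i = x})"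
    by (rule order_trans[OF card_UN_le[OF \<open>finite U\<close>]]) (intro sum_mono card_UN_le, simp)
  also have "\<dots> \<le> (\<Sum>x\<in>U. \<Sum>i<L. B)"
    using fiber by (intro sum_mono) auto
  also have "\<dots> = card U * (L * B)" by simp
  also have "card U \<le> card F * L"
  proof -
    have "card U \<le> (\<Sum>s\<in>F. card (set s))"
      unfolding U_def by (rule card_UN_le[OF F(2)])
    also have "\<dots> \<le> (\<Sum>s\<in>F. L)"
      using len F(1) card_length by (intro sum_mono) fastforce
    finally show ?thesis by simp
  qed
  then have "card U * (L * B) \<le> card F * L * (L * B)" by (rule mult_le_mono1)
  finally show ?thesis using F(4) by (simp add: algebra_simps)
qed

lemma card_subset_sols_le:
  assumes S: "S \<subseteq> sols A c k" and pos: "\<forall>y\<in>set c. 0 < y" and "c \<noteq> []"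
    and bound: "\<And>i m. i < length c \<Longrightarrow> m \<le> k \<Longrightarrow> card (sols A (remove_nth i c) m) \<le> B"
  shows "card S \<le> length c * length c * hatc S * B"
proof (rule card_le_hatc_mult_fiber_bound)
  show "finite S" using S sols_finite[OF pos] finite_subset by blast
  show "\<forall>s\<in>S. length s = length c" using S by (auto simp: sols_def)
  show "1 \<le> length c" using \<open>c \<noteq> []\<close> by (simp add: Suc_le_eq)
  show "\<forall>i<length c. \<forall>x. card {s\<in>S. s ! i = x} \<le> B"
    using card_sols_fiber_le[OF S _ pos] bound by (meson diff_le_self le_trans)
qed

lemma remove_nth_index_choices:
  assumes "ix \<in> index_choices h j" "i < j"
  shows "remove_nth i ix \<in> index_choices h (j - 1)"
  using assms sorted_wrt_remove_nth set_remove_nth_subset[of i ix]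
  by (auto simp: index_choices_def length_remove_nth)

lemma finite_index_choices: "finite (index_choices h j)"
  by (rule finite_subset[OF _ finite_lists_length_eq[of "{1..h}" j]])
     (auto simp: index_choices_def)

lemma upt_index_choices: "l \<le> h \<Longrightarrow> [1..<l+1] \<in> index_choices h l"
  unfolding index_choices_def using sorted_wrt_upt[of 1 "l+1"] by (auto simp del: upt_Suc)

lemma positive_coefficients_index_choices:
  "\<forall>i\<in>{1..h}. 0 < b i \<Longrightarrow> ix \<in> index_choices h j \<Longrightarrow> \<forall>y\<in>set (map b ix). 0 < y"
  by (auto simp: index_choices_def)

definition max_hat_r_star :: "nat \<Rightarrow> (nat \<Rightarrow> nat) \<Rightarrow> nat set \<Rightarrow> nat \<Rightarrow> nat \<Rightarrow> nat" where
  "max_hat_r_star h b A j n = Max ((\<lambda>k. hat_r_star_fn h b A j k) ` {0..n})"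

lemma prod_factor_eq:
  "2 \<le> l \<Longrightarrow> prod_factor h b A l n = real (\<Prod>j\<in>{2..l - 1}. max_hat_r_star h b A j n)"
proof -
  assume "2 \<le> l"
  then have "{2..<l} = {2..l - 1}" by auto
  then show ?thesis by (simp add: prod_factor_def max_hat_r_star_def)
qed

lemma hatc_le_hat_r_star_fn:
  "ix \<in> index_choices h j \<Longrightarrow> hatc (sols A (map b ix) k) \<le> hat_r_star_fn h b A j k"
  unfolding hat_r_star_fn_def by (rule Max_ge) (auto simp: finite_index_choices)

lemma hatc_le_max_hat_r_star:
  "ix \<in> index_choices h j \<Longrightarrow> k \<le> n \<Longrightarrow> hatc (sols A (map b ix) k) \<le> max_hat_r_star h b A j n"
  unfolding max_hat_r_star_def
  by (rule order_trans[OF hatc_le_hat_r_star_fn Max_ge]) auto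

lemma card_sols_index_choices_le:
  assumes pos: "\<forall>i\<in>{1..h}. 0 < b i" and "1 \<le> j" "j \<le> h"
    and "ix \<in> index_choices h j" "k \<le> n"
  shows "card (sols A (map b ix) k) \<le> (h\<^sup>2) ^ j * (\<Prod>i\<in>{2..j}. max_hat_r_star h b A i n)"
  using assms(2-)
proof (induction j arbitrary: ix k rule: nat_induct_at_least)
  case base
  then obtain a where "ix = [a]" by (auto simp: index_choices_def length_Suc_conv)
  moreover have "0 < b a" using base pos \<open>ix = [a]\<close> by (auto simp: index_choices_def)
  ultimately have "card (sols A (map b ix) k) \<le> 1" using card_sols_singleton_le by simp
  moreover have "1 \<le> h\<^sup>2" using base by (simp add: Suc_le_eq)
  ultimately show ?case by simp
next
  case (Suc j)
  let ?B = "(h\<^sup>2) ^ j * (\<Prod>i\<in>{2..j}. max_hat_r_star h b A i n)"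
  have len: "length ix = Suc j" using Suc.prems by (simp add: index_choices_def)
  have "card (sols A (map b ix) k) \<le> Suc j * Suc j * hatc (sols A (map b ix) k) * ?B"
  proof (rule card_subset_sols_le[of _ A "map b ix" k, unfolded length_map len])
    show "\<forall>y\<in>set (map b ix). 0 < y"
      using positive_coefficients_index_choices[OF pos Suc.prems(2)] .
    fix i m assume "i < Suc j" "m \<le> k"
    then show "card (sols A (remove_nth i (map b ix)) m) \<le> ?B"
      using Suc remove_nth_index_choices[OF Suc.prems(2), of i] len
      by (simp add: remove_nth_map)
  qed (use len in auto)
  also have "\<dots> \<le> h\<^sup>2 * max_hat_r_star h b A (Suc j) n * ?B"
  proof -
    have "Suc j * Suc j \<le> h\<^sup>2"
      using mult_le_mono[OF Suc.prems(1) Suc.prems(1)] by (simp only: power2_eq_square)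
    then show ?thesis
      using hatc_le_max_hat_r_star[OF Suc.prems(2,3)] by (intro mult_le_mono mult_le_mono1)
  qed
  also have "\<dots> = (h\<^sup>2) ^ Suc j * (\<Prod>i\<in>{2..Suc j}. max_hat_r_star h b A i n)"
    using \<open>1 \<le> j\<close> by (simp add: atLeastAtMostSuc_conv algebra_simps)
  finally show ?case .
qed

lemma card_subset_sols_le_prod_factor:
  assumes pos: "\<forall>i\<in>{1..h}. 0 < b i" and l: "2 \<le> l" "l \<le> h"
    and ix: "ix \<in> index_choices h l" and S: "S \<subseteq> sols A (map b ix) n"
  shows "real (card S) \<le> real ((h\<^sup>2) ^ h) * real (hatc S) * prod_factor h b A l n"
proof -
  let ?P = "\<Prod>j\<in>{2..l - 1}. max_hat_r_star h b A j n"
  have len: "length ix = l" using ix by (simp add: index_choices_def)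
  have "card S \<le> l * l * hatc S * ((h\<^sup>2) ^ (l - 1) * ?P)"
  proof (rule card_subset_sols_le[OF S, unfolded length_map len])
    show "\<forall>y\<in>set (map b ix). 0 < y" by (rule positive_coefficients_index_choices[OF pos ix])
    show "map b ix \<noteq> []" using len l by auto
    fix i m assume "i < l" "m \<le> n"
    then show "card (sols A (remove_nth i (map b ix)) m) \<le> (h\<^sup>2) ^ (l - 1) * ?P"
      using card_sols_index_choices_le[OF pos _ _ remove_nth_index_choices[OF ix]] l
      by (simp add: remove_nth_map)
  qed
  also have "\<dots> \<le> (h\<^sup>2) ^ h * hatc S * ?P"
  proof -
    have "l * l * (h\<^sup>2) ^ (l - 1) \<le> h\<^sup>2 * (h\<^sup>2) ^ (l - 1)"
      using l by (intro mult_le_mono1) (simp add: power2_eq_square mult_le_mono)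
    also have "\<dots> = (h\<^sup>2) ^ l" using l by (simp add: power_eq_if)
    also have "\<dots> \<le> (h\<^sup>2) ^ h" using l by (intro power_increasing) auto
    finally show ?thesis by (simp add: algebra_simps)
  qed
  finally show ?thesis
    unfolding prod_factor_eq[OF l(1)] by (simp only: of_nat_le_iff of_nat_mult[symmetric])
qed

lemma r_star_fn_attained:
  assumes "l \<le> h"
  obtains ix where "ix \<in> index_choices h l" "r_star_fn h b A l n = card (sols A (map b ix) n)"
proof -
  let ?I = "(\<lambda>ix. card (sols A (map b ix) n)) ` index_choices h l"
  have "Max ?I \<in> ?I"
    using finite_index_choices upt_index_choices[OF assms] by (intro Max_in) auto
  then show ?thesis using that unfolding r_star_fn_def by auto
qed

lemma r_star_fn_le_prod_factor:
  assumes pos: "\<forall>i\<in>{1..h}. 0 < b i" and l: "2 \<le> l" "l \<le> h"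
  shows "real (r_star_fn h b A l n)
    \<le> real ((h\<^sup>2) ^ h) * real (hat_r_star_fn h b A l n) * prod_factor h b A l n"
proof -
  obtain ix where ix: "ix \<in> index_choices h l"
    and r_star: "r_star_fn h b A l n = card (sols A (map b ix) n)"
    using r_star_fn_attained[OF l(2)] .
  have "real (r_star_fn h b A l n)
      \<le> real ((h\<^sup>2) ^ h) * real (hatc (sols A (map b ix) n)) * prod_factor h b A l n"
    unfolding r_star by (rule card_subset_sols_le_prod_factor[OF pos l ix order_refl])
  also have "\<dots> \<le> real ((h\<^sup>2) ^ h) * real (hat_r_star_fn h b A l n) * prod_factor h b A l n"
    using hatc_le_hat_r_star_fn[OF ix] prod_factor_def
    by (intro mult_right_mono mult_left_mono) (auto simp: prod_nonneg)
  finally show ?thesis .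
qed

theorem mainTheorem9:
  fixes h :: nat and b :: "nat \<Rightarrow> nat"
  assumes "h \<ge> 2"
    and "\<forall>i\<in>{1..h}. b i > 0"
    and "Gcd (b ` {1..h}) = 1"
  shows "\<exists>C::real. \<forall>(A::nat set) (\<delta>::real) (l::nat) (n::nat).
           0 < \<delta> \<longrightarrow> \<delta> < 1 \<longrightarrow> 2 \<le> l \<longrightarrow> l \<le> h \<longrightarrow>
             real (r_fn b A l n) \<le> C * real (hat_r_fn b A l n) * prod_factor h b A l n
           \<and> real (r_star_fn h b A l n) \<le> C * real (hat_r_star_fn h b A l n) * prod_factor h b A l n
           \<and> real (rho_fn b A l n) \<le> C * real (hat_rho_fn b A l n) * prod_factor h b A l n
           \<and> real (rho_small_fn b \<delta> A l n) \<le> C * real (hat_rho_small_fn b \<delta> A l n) * prod_factor h b A l n"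
proof (intro exI allI impI)
  fix A :: "nat set" and \<delta> :: real and l n :: nat
  assume "2 \<le> l" "l \<le> h"
  let ?C = "real ((h\<^sup>2) ^ h)" and ?P = "prod_factor h b A l n"
  have bound: "real (card S) \<le> ?C * real (hatc S) * ?P" if "S \<subseteq> sols A (bvec b l) n" for S
    using card_subset_sols_le_prod_factor[OF assms(2) \<open>2 \<le> l\<close> \<open>l \<le> h\<close>
        upt_index_choices[OF \<open>l \<le> h\<close>]] that
    by (simp add: bvec_def)
  note r_star_fn_le_prod_factor[OF assms(2) \<open>2 \<le> l\<close> \<open>l \<le> h\<close>]
  moreover note bound[of "r_sols b A l n"] bound[of "rho_sols b A l n"]
    bound[of "rho_small_sols b \<delta> A l n"]
  ultimately show "real (r_fn b A l n) \<le> ?C * real (hat_r_fn b A l n) * ?P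
      \<and> real (r_star_fn h b A l n) \<le> ?C * real (hat_r_star_fn h b A l n) * ?P
      \<and> real (rho_fn b A l n) \<le> ?C * real (hat_rho_fn b A l n) * ?P
      \<and> real (rho_small_fn b \<delta> A l n) \<le> ?C * real (hat_rho_small_fn b \<delta> A l n) * ?P"
    unfolding r_fn_def hat_r_fn_def rho_fn_def hat_rho_fn_def rho_small_fn_def hat_rho_small_fn_def
    by (auto simp: r_sols_def rho_sols_def rho_small_sols_def)
qed

end
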